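(* Let $\Gamma$ be a connected signed graph on $N$ vertices and $t^*\in\mathbb{R}$. The dimension of the kernel of $\mathcal{L}(\Gamma(t^* ))$ restricted to $\mathbf{1}^\perp=\{v\in\mathbb{R}^N:\sum_iv_i=0\}$ equals the multiplicity of $t^*$ as a root of the polynomial $t\mapsto \mathcal{M}(\Gamma(t))$.
   Context: A signed graph $\Gamma$ is a finite simple undirected graph with vertex set $\{1,\dots,N\}$ in which every edge $\{i,j\}$ carries a nonzero real weight $\gamma_{ij}$, which may be of either sign. For real $t$, $\Gamma(t)$ is the weighted graph with the same edges and weights $\gamma_{ij}(t)=\gamma_{ij}$ if $\gamma_{ij}>0$ and $\gamma_{ij}(t)=t\gamma_{ij}$ if $\gamma_{ij}<0$. For a weighted graph $H$ with weights $w_{ij}$, its Laplacian $\mathcal{L}(H)$ has off-diagonal entries $w_{ij}$ (zero for non-edges) and diagonal entries $-\sum_{k\neq i}w_{ik}$, and $\mathcal{M}(H)=\sum_T\prod_{e\in E(T)}w(e)$ summed over spanning trees $T$ of $H$; equivalently $\mathcal{M}(H)=\frac{(-1)^{n-1}}{n}\prod_{i=2}^n\lambda_i$ where $n=|V(H)|$ and $\lambda_1=0,\lambda_2,\dots,\lambda_n$ are the eigenvalues of $\mathcal{L}(H)$. *)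

theory Defs
  imports "HOL-Analysis.Analysis" "HOL-Computational_Algebra.Polynomial"
begin

text \<open>A signed graph on the finite vertex type 'n (N = CARD('n) vertices) is given by a
symmetric weight function with zero diagonal; the edges are the pairs with nonzero weight.\<close>

definition signed_graph :: "('n::finite \<Rightarrow> 'n \<Rightarrow> real) \<Rightarrow> bool" where
  "signed_graph g \<longleftrightarrow> (\<forall>i j. g i j = g j i) \<and> (\<forall>i. g i i = 0)"

definition edges :: "('n \<Rightarrow> 'n \<Rightarrow> 'a::zero) \<Rightarrow> 'n set set" where
  "edges g = {{i, j} | i j. i \<noteq> j \<and> g i j \<noteq> 0}"

definition adj :: "'n set set \<Rightarrow> ('n \<times> 'n) set" where
  "adj F = {(u, v). {u, v} \<in> F}"

definition connected_by :: "'n set set \<Rightarrow> bool" where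
  "connected_by F \<longleftrightarrow> (\<forall>u v. (u, v) \<in> (adj F)\<^sup>*)"

definition graph_connected :: "('n::finite \<Rightarrow> 'n \<Rightarrow> 'a::zero) \<Rightarrow> bool" where
  "graph_connected g \<longleftrightarrow> connected_by (edges g)"

definition spanning_trees :: "'n::finite set set \<Rightarrow> 'n set set set" where
  "spanning_trees E = {T. T \<subseteq> E \<and> connected_by T \<and> card T = CARD('n) - 1}"

text \<open>The two endpoints of an edge (an unordered pair); the weight is symmetric so the
choice of order is irrelevant.\<close>
definition ends :: "'n set \<Rightarrow> 'n \<times> 'n" where
  "ends e = (SOME p. e = {fst p, snd p} \<and> fst p \<noteq> snd p)"

definition edge_weight :: "('n \<Rightarrow> 'n \<Rightarrow> 'a) \<Rightarrow> 'n set \<Rightarrow> 'a" where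
  "edge_weight g e = g (fst (ends e)) (snd (ends e))"

text \<open>M(H) = sum over spanning trees of the product of the edge weights, for weights in any
commutative ring (used with real weights and with polynomial weights).\<close>
definition M :: "'n::finite set set \<Rightarrow> ('n set \<Rightarrow> 'a::comm_ring_1) \<Rightarrow> 'a" where
  "M E w = (\<Sum>T\<in>spanning_trees E. \<Prod>e\<in>T. w e)"

definition gamma_t :: "('n \<Rightarrow> 'n \<Rightarrow> real) \<Rightarrow> real \<Rightarrow> 'n \<Rightarrow> 'n \<Rightarrow> real" where
  "gamma_t g t i j = (if g i j > 0 then g i j else t * g i j)"

definition gamma_poly :: "('n \<Rightarrow> 'n \<Rightarrow> real) \<Rightarrow> 'n \<Rightarrow> 'n \<Rightarrow> real poly" where
  "gamma_poly g i j = (if g i j > 0 then [:g i j:] else [:0, g i j:])"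

definition M_poly :: "('n::finite \<Rightarrow> 'n \<Rightarrow> real) \<Rightarrow> real poly" where
  "M_poly g = M (edges g) (edge_weight (gamma_poly g))"

definition laplacian :: "('n::finite \<Rightarrow> 'n \<Rightarrow> real) \<Rightarrow> real^'n^'n" where
  "laplacian w = (\<chi> i j. if i = j then - (\<Sum>k\<in>UNIV - {i}. w i k) else w i j)"

end

theory Submission
  imports Defs
begin

text \<open>
  Ground the Laplacian at a vertex \<open>r\<close>: replace its \<open>r\<close>-th row and column by those of the
  identity. The grounded matrix of \<open>\<Gamma>(t)\<close> is a weighted sum of rank-one matrices \<open>v v\<^sup>T\<close>,
  where \<open>v\<close> runs over the unit vector at \<open>r\<close> and the incidence vectors of the edges with their
  \<open>r\<close>-th entry deleted. As a function of \<open>t\<close> it is a pencil \<open>C + t D\<close> whose slope \<open>D\<close> carries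
  the negative edges with reversed sign, hence is positive semidefinite. Expanding
  \<open>det (C + t D)\<close> by multilinearity in the rows, and using that a square matrix made of these
  vectors has determinant \<open>\<plusminus>1\<close> or \<open>0\<close> according to whether the chosen edges form a spanning
  tree, gives \<open>det (C + t D) = \<plusminus>M(\<Gamma>(t))\<close>. The kernel of the grounded matrix is
  \<open>ker L \<inter> {v\<^sub>r = 0}\<close>, which has the dimension of \<open>ker L \<inter> 1\<^sup>\<bottom>\<close>. Finally, for a symmetric
  pencil with semidefinite slope the multiplicity of a root \<open>a\<close> of \<open>det (C + t D)\<close> is
  \<open>dim ker (C + a D)\<close>: in a basis adapted to this kernel the determinant factors as \<open>(t - a)\<^sup>k\<close>
  times a polynomial that does not vanish at \<open>a\<close>. The determinant is not identically zero
  because at \<open>t = -1\<close> all weights are positive and the graph is connected.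
\<close>

section \<open>Symmetric matrix pencils\<close>

lemma det_nz_iff_ker:
  fixes A :: "'a::field^'n^'n"
  shows "det A \<noteq> 0 \<longleftrightarrow> (\<forall>x. A *v x = 0 \<longrightarrow> x = 0)"
  by (simp add: invertible_det_nz[symmetric] invertible_left_inverse matrix_left_invertible_ker)

lemma det_nz_if_span_columns:
  fixes Q :: "real^'n^'n"
  assumes "span (columns Q) = UNIV"
  shows "det Q \<noteq> 0"
  using assms matrix_right_invertible_span_columns[of Q]
  by (simp add: invertible_det_nz[symmetric] invertible_right_inverse span_vec_eq)

lemma indexed_basis_extension:
  fixes B :: "(real^'n) set"
  assumes "independent B"
  obtains \<beta> :: "'n \<Rightarrow> real^'n" and K :: "'n set"
  where "bij_betw \<beta> K B" "range \<beta> = extend_basis B"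
proof -
  define BB where "BB = extend_basis B"
  have BB: "B \<subseteq> BB" "independent BB" "span BB = UNIV"
    using assms by (simp_all add: BB_def extend_basis_superset independent_extend_basis)
  have finBB: "finite BB" using BB(2) finiteI_independent by blast
  have finB: "finite B" using finBB BB(1) finite_subset by blast
  have cardBB: "card BB = CARD('n)"
    using BB(2,3) dim_span_eq_card_independent[of BB] by simp
  obtain K :: "'n set" where K: "card K = card B"
    using cardBB BB(1) finBB card_mono obtain_subset_with_card_n by metis
  obtain f1 where f1: "bij_betw f1 K B"
    using finite_same_card_bij[OF finite finB K] by blast
  have card_rest: "card (UNIV - K) = card (BB - B)"
    using cardBB K finB BB(1) by (simp add: card_Diff_subset)
  obtain f2 where f2: "bij_betw f2 (UNIV - K) (BB - B)"
    using finite_same_card_bij[OF finite _ card_rest] finBB by blast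
  define \<beta> where "\<beta> j = (if j \<in> K then f1 j else f2 j)" for j
  have \<beta>K: "bij_betw \<beta> K B"
    using f1 by (subst bij_betw_cong[of K \<beta> f1]) (auto simp: \<beta>_def)
  have "bij_betw \<beta> (UNIV - K) (BB - B)"
    using f2 by (subst bij_betw_cong[of "UNIV - K" \<beta> f2]) (auto simp: \<beta>_def)
  from bij_betw_combine[OF \<beta>K this] have "bij_betw \<beta> UNIV BB"
    using BB(1) by (simp add: Un_absorb1)
  then have "range \<beta> = BB" by (simp add: bij_betw_def)
  with \<beta>K show ?thesis unfolding BB_def by (rule that)
qed

lemma basis_matrix:
  fixes N :: "(real^'n) set"
  obtains Q :: "real^'n^'n" and K :: "'n set"
  where "det Q \<noteq> 0" "card K = dim N" "\<And>j. j \<in> K \<Longrightarrow> column j Q \<in> N"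
    "\<And>v. v \<in> N \<Longrightarrow> \<exists>c. v = Q *v c \<and> (\<forall>j. j \<notin> K \<longrightarrow> c $ j = 0)"
proof -
  obtain B where B: "B \<subseteq> N" "independent B" "N \<subseteq> span B" "card B = dim N"
    by (rule basis_exists)
  obtain \<beta> :: "'n \<Rightarrow> real^'n" and K where \<beta>K: "bij_betw \<beta> K B" and \<beta>: "range \<beta> = extend_basis B"
    using indexed_basis_extension[OF B(2)] by blast
  have finB: "finite B" using B(2) finiteI_independent by blast
  define Q :: "real^'n^'n" where "Q = (\<chi> i j. \<beta> j $ i)"
  have col: "column j Q = \<beta> j" for j
    by (simp add: Q_def column_def vec_eq_iff)
  show ?thesis
  proof
    have "columns Q = extend_basis B"
      using \<beta> by (simp add: columns_def col full_SetCompr_eq)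
    then show "det Q \<noteq> 0"
      using B(2) by (intro det_nz_if_span_columns) (simp add: span_extend_basis)
    show "card K = dim N" using \<beta>K B(4) by (simp add: bij_betw_same_card)
    show "column j Q \<in> N" if "j \<in> K" for j
      using bij_betw_apply[OF \<beta>K that] B(1) by (auto simp: col)
    show "\<exists>c. v = Q *v c \<and> (\<forall>j. j \<notin> K \<longrightarrow> c $ j = 0)" if vN: "v \<in> N" for v
    proof -
      obtain u where u: "v = (\<Sum>b\<in>B. u b *\<^sub>R b)"
        using vN B(3) unfolding span_finite[OF finB] by (auto simp: scalar_mult_eq_scaleR)
      define c :: "real^'n" where "c = (\<chi> j. if j \<in> K then u (\<beta> j) else 0)"
      have "Q *v c = (\<Sum>j\<in>UNIV. c $ j *\<^sub>R \<beta> j)"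
        by (simp add: matrix_mult_sum col scalar_mult_eq_scaleR)
      also have "\<dots> = (\<Sum>j\<in>K. u (\<beta> j) *\<^sub>R \<beta> j)"
        by (simp add: c_def if_distrib[of "\<lambda>x. x *\<^sub>R _"] sum.If_cases)
      also have "\<dots> = v"
        using u sum.reindex_bij_betw[OF \<beta>K, of "\<lambda>b. u b *\<^sub>R b"] by simp
      finally show ?thesis by (intro exI[of _ c]) (simp add: c_def)
    qed
  qed
qed

lemma poly_det: "poly (det (P :: 'a::comm_ring_1 poly^'n^'n)) x = det (\<chi> i j. poly (P $ i $ j) x)"
  unfolding det_def by (simp add: poly_sum poly_prod of_int_poly)

definition matrix_pencil :: "real^'n^'n \<Rightarrow> real^'n^'n \<Rightarrow> real poly^'n^'n" where
  "matrix_pencil C D = (\<chi> i j. [:C $ i $ j, D $ i $ j:])"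

lemma poly_det_matrix_pencil: "poly (det (matrix_pencil C D)) t = det (C + t *\<^sub>R D)"
  unfolding poly_det matrix_pencil_def by (rule arg_cong[of _ _ det]) (simp add: vec_eq_iff)

lemma matrix_pencil_common_kernel:
  assumes "det (matrix_pencil C D) \<noteq> 0" and "C *v u = 0" and "D *v u = 0"
  shows "u = 0"
proof (rule ccontr)
  assume "u \<noteq> 0"
  have "(C + t *\<^sub>R D) *v u = 0" for t
    using assms(2,3) by (simp add: matrix_vector_mult_add_rdistrib scaleR_matrix_vector_assoc[symmetric])
  with \<open>u \<noteq> 0\<close> have "poly (det (matrix_pencil C D)) t = 0" for t
    unfolding poly_det_matrix_pencil using det_nz_iff_ker[of "C + t *\<^sub>R D"] by blast
  with assms(1) show False
    using poly_all_0_iff_0 by blast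
qed

lemma symmetric_pencil_kernel_complement:
  fixes C D :: "real^'n^'n" and a :: real
  defines "A \<equiv> C + a *\<^sub>R D"
  assumes sym: "transpose A = A"
    and semidef: "\<And>x. x \<bullet> (D *v x) = 0 \<Longrightarrow> D *v x = 0"
    and nondeg: "det (matrix_pencil C D) \<noteq> 0"
    and u: "A *v u = 0" and uw: "D *v u + A *v w = 0"
  shows "u = 0" and "A *v w = 0"
proof -
  have "D *v u = - (A *v w)"
    using uw by (simp add: eq_neg_iff_add_eq_0)
  then have "u \<bullet> (D *v u) = - (u \<bullet> (A *v w))"
    by simp
  also have "u \<bullet> (A *v w) = (A *v u) \<bullet> w"
    by (metis sym dot_lmul_matrix vector_transpose_matrix)
  finally have Du: "D *v u = 0"
    using u semidef by simp
  then have "C *v u = 0"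
    using u by (simp add: A_def matrix_vector_mult_add_rdistrib scaleR_matrix_vector_assoc[symmetric])
  with nondeg Du show "u = 0"
    using matrix_pencil_common_kernel by blast
  with uw show "A *v w = 0" by simp
qed

lemma basis_matrix_kernel_coords:
  fixes A Q :: "real^'n^'n"
  assumes Q: "det Q \<noteq> 0" "\<And>v. A *v v = 0 \<Longrightarrow> \<exists>c. v = Q *v c \<and> (\<forall>j. j \<notin> K \<longrightarrow> c $ j = 0)"
    and x: "A *v (Q *v x) = 0" "\<And>j. j \<in> K \<Longrightarrow> x $ j = 0"
  shows "x = 0"
proof -
  obtain c where c: "Q *v x = Q *v c" "\<forall>j. j \<notin> K \<longrightarrow> c $ j = 0"
    using Q(2)[OF x(1)] by blast
  then have "Q *v (x - c) = 0"
    by (simp add: matrix_vector_mult_diff_distrib)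
  then have "x = c"
    using Q(1) det_nz_iff_ker[of Q] by (metis eq_iff_diff_eq_0)
  with c(2) x(2) show ?thesis
    by (metis vec_eq_iff zero_index)
qed

lemma det_kernel_columns_replaced:
  fixes C D Q :: "real^'n^'n" and a :: real
  defines "A \<equiv> C + a *\<^sub>R D"
  assumes sym: "transpose A = A"
    and semidef: "\<And>x. x \<bullet> (D *v x) = 0 \<Longrightarrow> D *v x = 0"
    and nondeg: "det (matrix_pencil C D) \<noteq> 0"
    and Q: "det Q \<noteq> 0" "\<And>j. j \<in> K \<Longrightarrow> A *v column j Q = 0"
      "\<And>v. A *v v = 0 \<Longrightarrow> \<exists>c. v = Q *v c \<and> (\<forall>j. j \<notin> K \<longrightarrow> c $ j = 0)"
  shows "det (\<chi> j. if j \<in> K then D *v column j Q else A *v column j Q) \<noteq> 0"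
proof -
  have "x = 0" if x: "transpose (\<chi> j. if j \<in> K then D *v column j Q else A *v column j Q) *v x = 0" for x
  proof -
    define xK :: "real^'n" where "xK = (\<chi> j. if j \<in> K then x $ j else 0)"
    define xN :: "real^'n" where "xN = (\<chi> j. if j \<in> K then 0 else x $ j)"
    have lin: "M *v (Q *v y) = (\<Sum>j\<in>UNIV. y $ j *\<^sub>R (M *v column j Q))" for M y
      unfolding matrix_mult_sum[of Q] scalar_mult_eq_scaleR
      by (simp add: linear_sum[OF matrix_vector_mul_linear] matrix_vector_mult_scaleR)
    have "transpose (\<chi> j. if j \<in> K then D *v column j Q else A *v column j Q) *v x
        = (\<Sum>j\<in>UNIV. x $ j *\<^sub>R (if j \<in> K then D *v column j Q else A *v column j Q))"
      by (simp add: matrix_mult_sum scalar_mult_eq_scaleR row_def)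
    also have "\<dots> = D *v (Q *v xK) + A *v (Q *v xN)"
      unfolding lin sum.distrib[symmetric] by (rule sum.cong) (auto simp: xK_def xN_def)
    finally have "D *v (Q *v xK) + A *v (Q *v xN) = 0"
      using x by simp
    moreover have "A *v (Q *v xK) = 0"
      unfolding lin using Q(2) by (intro sum.neutral) (simp add: xK_def)
    ultimately have "Q *v xK = 0" and AxN: "A *v (Q *v xN) = 0"
      using symmetric_pencil_kernel_complement[OF sym[unfolded A_def] semidef nondeg]
      unfolding A_def by blast+
    then have "xK = 0"
      using Q(1) det_nz_iff_ker by blast
    moreover have "xN = 0"
      using basis_matrix_kernel_coords[OF Q(1,3) AxN] by (simp add: xN_def)
    moreover have "x = xK + xN"
      by (simp add: vec_eq_iff xK_def xN_def)
    ultimately show "x = 0" by simp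
  qed
  then have "det (transpose (\<chi> j. if j \<in> K then D *v column j Q else A *v column j Q)) \<noteq> 0"
    unfolding det_nz_iff_ker by blast
  then show ?thesis by simp
qed

lemma sum_pCons_pCons:
  "finite S \<Longrightarrow> (\<Sum>k\<in>S. [:f k, g k:]) = [:\<Sum>k\<in>S. f k, \<Sum>k\<in>S. g k:]"
  by (induct S rule: finite_induct) auto

text \<open>For \<open>j \<in> K\<close> the \<open>j\<close>-th column of \<open>(C + t D) Q\<close> is \<open>(t - a) D q\<^sub>j\<close>.\<close>

lemma matrix_pencil_factor_kernel_columns:
  fixes C D Q :: "real^'n^'n" and a :: real
  assumes ker: "\<And>j. j \<in> K \<Longrightarrow> (C + a *\<^sub>R D) *v column j Q = 0"
  obtains R :: "real poly^'n^'n"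
  where "smult (det Q) (det (matrix_pencil C D)) = [:-a, 1:] ^ card K * det R"
    and "poly (det R) a = det (\<chi> j. if j \<in> K then D *v column j Q else (C + a *\<^sub>R D) *v column j Q)"
proof
  define Qp :: "real poly^'n^'n" where "Qp = (\<chi> i j. [:Q $ i $ j:])"
  define cq where "cq j = C *v column j Q" for j
  define dq where "dq j = D *v column j Q" for j
  define R :: "real poly^'n^'n" where
    "R = (\<chi> j i. if j \<in> K then [:dq j $ i:] else [:cq j $ i, dq j $ i:])"
  define cf where "cf j = (if j \<in> K then [:-a, 1:] else 1)" for j
  have "det Qp = [:det Q:]"
    by (rule poly_eq_poly_eq_iff[THEN iffD1]) (simp add: fun_eq_iff poly_det Qp_def)
  have kernel_col: "cq j = - a *\<^sub>R dq j" if "j \<in> K" for j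
    using ker[OF that]
    by (simp add: cq_def dq_def matrix_vector_mult_add_rdistrib scaleR_matrix_vector_assoc[symmetric]
        eq_neg_iff_add_eq_0)
  have "(matrix_pencil C D ** Qp) $ i $ j = [:cq j $ i, dq j $ i:]" for i j
    by (simp add: matrix_pencil_def Qp_def cq_def dq_def matrix_matrix_mult_def
        matrix_vector_mult_def column_def sum_pCons_pCons mult.commute)
  then have "transpose (matrix_pencil C D ** Qp) = (\<chi> j. cf j *s R $ j)"
    by (simp add: vec_eq_iff transpose_def R_def cf_def kernel_col)
  then have "det (matrix_pencil C D ** Qp) = prod cf UNIV * det (\<chi> j. R $ j)"
    by (metis det_transpose det_rows_mul)
  also have "prod cf UNIV = [:-a, 1:] ^ card K"
    by (simp add: cf_def prod.If_cases)
  finally show "smult (det Q) (det (matrix_pencil C D)) = [:-a, 1:] ^ card K * det R"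
    by (simp add: det_mul \<open>det Qp = [:det Q:]\<close>)
  show "poly (det R) a = det (\<chi> j. if j \<in> K then D *v column j Q else (C + a *\<^sub>R D) *v column j Q)"
    unfolding poly_det R_def by (rule arg_cong[of _ _ det])
      (simp add: vec_eq_iff cq_def dq_def matrix_vector_mult_add_rdistrib scaleR_matrix_vector_assoc[symmetric])
qed

lemma matrix_pencil_root_order:
  fixes C D :: "real^'n^'n" and a :: real
  defines "A \<equiv> C + a *\<^sub>R D"
  assumes sym: "transpose A = A"
    and semidef: "\<And>x. x \<bullet> (D *v x) = 0 \<Longrightarrow> D *v x = 0"
    and nondeg: "det (matrix_pencil C D) \<noteq> 0"
  shows "order a (det (matrix_pencil C D)) = dim {x. A *v x = 0}"
proof -
  obtain Q :: "real^'n^'n" and K where Q: "det Q \<noteq> 0" "card K = dim {x. A *v x = 0}"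
      "\<And>j. j \<in> K \<Longrightarrow> A *v column j Q = 0"
      "\<And>v. A *v v = 0 \<Longrightarrow> \<exists>c. v = Q *v c \<and> (\<forall>j. j \<notin> K \<longrightarrow> c $ j = 0)"
    using basis_matrix[of "{x. A *v x = 0}"] by auto
  have ker: "(C + a *\<^sub>R D) *v column j Q = 0" if "j \<in> K" for j
    using Q(3)[OF that] by (simp add: A_def)
  obtain R :: "real poly^'n^'n" where factor: "smult (det Q) (det (matrix_pencil C D)) = [:-a, 1:] ^ card K * det R"
    and polyR: "poly (det R) a
      = det (\<chi> j. if j \<in> K then D *v column j Q else (C + a *\<^sub>R D) *v column j Q)"
    using matrix_pencil_factor_kernel_columns[OF ker] by blast
  have "poly (det R) a \<noteq> 0"
    unfolding polyR using det_kernel_columns_replaced[OF sym[unfolded A_def] semidef nondeg Q(1)] Q(3,4)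
    by (simp add: A_def)
  then have "order a (det R) = 0"
    by (simp add: order_0I)
  have "order a (det (matrix_pencil C D)) = order a ([:-a, 1:] ^ card K * det R)"
    using Q(1) by (simp flip: factor add: order_smult)
  also have "\<dots> = card K"
    using factor Q(1) nondeg \<open>order a (det R) = 0\<close> by (subst order_mult) (auto simp: order_power_n_n)
  finally show ?thesis
    using Q(2) by simp
qed

section \<open>The matrix-tree theorem for grounded Gram matrices\<close>

lemma det_rows_sum_expand:
  fixes a :: "'n::finite \<Rightarrow> 's \<Rightarrow> 'a::comm_ring_1^'n"
  assumes "finite S"
  shows "det (\<chi> i. \<Sum>x\<in>S. a i x) = (\<Sum>f\<in>UNIV \<rightarrow>\<^sub>E S. det (\<chi> i. a i (f i)))"
proof -
  have "det (\<chi> i. \<Sum>x\<in>S. a i x)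
      = (\<Sum>p | p permutes UNIV. of_int (sign p) * (\<Prod>i\<in>UNIV. \<Sum>x\<in>S. a i x $ p i))"
    by (simp add: det_def sum_component)
  also have "\<dots> = (\<Sum>p | p permutes UNIV. \<Sum>f\<in>UNIV \<rightarrow>\<^sub>E S.
      of_int (sign p) * (\<Prod>i\<in>UNIV. a i (f i) $ p i))"
    by (simp add: prod_sum_PiE assms sum_distrib_left)
  also have "\<dots> = (\<Sum>f\<in>UNIV \<rightarrow>\<^sub>E S. det (\<chi> i. a i (f i)))"
    by (subst sum.swap) (simp add: det_def)
  finally show ?thesis .
qed

definition end1 :: "'n set \<Rightarrow> 'n" where "end1 e = fst (ends e)"

definition end2 :: "'n set \<Rightarrow> 'n" where "end2 e = snd (ends e)"

lemma ends_card_2: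
  assumes "card e = 2"
  shows "end1 e \<noteq> end2 e" and "e = {end1 e, end2 e}"
proof -
  have "\<exists>p. e = {fst p, snd p} \<and> fst p \<noteq> snd p"
    using assms by (auto simp: card_2_iff)
  from someI_ex[OF this] show "end1 e \<noteq> end2 e" and "e = {end1 e, end2 e}"
    by (simp_all add: end1_def end2_def ends_def)
qed

lemma card_edges: "e \<in> edges g \<Longrightarrow> card e = 2"
  by (auto simp: edges_def)

lemma edge_weight_ends: "edge_weight w e = w (end1 e) (end2 e)"
  by (simp add: edge_weight_def end1_def end2_def)

lemma adj_ends:
  assumes "card e = 2" and "e \<in> S"
  shows "(end1 e, end2 e) \<in> adj S" and "(end2 e, end1 e) \<in> adj S"
  using assms ends_card_2[OF assms(1)] by (auto simp: adj_def insert_commute)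

lemma adj_rtrancl_preserves:
  assumes S: "\<forall>e\<in>S. card e = 2"
    and P: "\<And>e. e \<in> S \<Longrightarrow> P (end1 e) \<longleftrightarrow> P (end2 e)"
    and uv: "(u, v) \<in> (adj S)\<^sup>*" and "P u"
  shows "P v"
  using uv \<open>P u\<close>
proof (induction rule: rtrancl_induct)
  case (step x y)
  then have e: "{x, y} \<in> S" by (simp add: adj_def)
  then have "{x, y} = {end1 {x, y}, end2 {x, y}}"
    using S ends_card_2 by blast
  with P[OF e] step show ?case
    by (auto simp: doubleton_eq_iff)
qed

lemma sym_adj_rtrancl: "sym ((adj S)\<^sup>*)"
  by (rule sym_rtrancl) (auto simp: sym_def adj_def insert_commute)

lemma connected_by_from: "connected_by S \<longleftrightarrow> (\<forall>v. (r, v) \<in> (adj S)\<^sup>*)"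
  unfolding connected_by_def
  by (metis sym_adj_rtrancl rtrancl_trans symD)

definition incidence :: "'n::finite set \<Rightarrow> real^'n" where
  "incidence e = (\<chi> i. (if i = end1 e then 1 else 0) - (if i = end2 e then 1 else 0))"

definition ground_row :: "'n::finite \<Rightarrow> 'n set option \<Rightarrow> real^'n" where
  "ground_row r x = (case x of
      None \<Rightarrow> axis r 1
    | Some e \<Rightarrow> (\<chi> i. if i = r then 0 else incidence e $ i))"

definition ground_rows :: "'n set set \<Rightarrow> 'n set option set" where
  "ground_rows E = insert None (Some ` E)"

lemma inner_ground_row_Some:
  "ground_row r (Some e) \<bullet> y
    = (if end1 e = r then 0 else y $ end1 e) - (if end2 e = r then 0 else y $ end2 e)"
proof -
  have "ground_row r (Some e) \<bullet> y = (\<Sum>i\<in>UNIV.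
      (if i = end1 e then (if end1 e = r then 0 else y $ end1 e) else 0)
    - (if i = end2 e then (if end2 e = r then 0 else y $ end2 e) else 0))"
    unfolding inner_vec_def ground_row_def incidence_def by (intro sum.cong) auto
  then show ?thesis
    by (simp add: sum_subtractf)
qed

lemma inner_ground_row_Some_grounded:
  "y $ r = 0 \<Longrightarrow> ground_row r (Some e) \<bullet> y = y $ end1 e - y $ end2 e"
  by (simp add: inner_ground_row_Some)

lemma inner_ground_row_None: "ground_row r None \<bullet> y = y $ r"
  by (simp add: ground_row_def inner_axis')

text \<open>With weight \<open>1\<close> on \<open>None\<close> and \<open>-w\<^sub>e\<close> on the edges this is the Laplacian of \<open>w\<close> with row and
  column \<open>r\<close> replaced by those of the identity (\<open>grounded_gram_entry\<close> below).\<close>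

definition grounded_gram :: "'n::finite \<Rightarrow> 'n set set \<Rightarrow> ('n set option \<Rightarrow> real) \<Rightarrow> real^'n^'n" where
  "grounded_gram r E \<beta> = (\<chi> i j. \<Sum>x\<in>ground_rows E. \<beta> x * ground_row r x $ i * ground_row r x $ j)"

lemma grounded_gram_mult:
  "grounded_gram r E \<beta> *v y = (\<Sum>x\<in>ground_rows E. (\<beta> x * (ground_row r x \<bullet> y)) *\<^sub>R ground_row r x)"
proof -
  have "(grounded_gram r E \<beta> *v y) $ i
      = (\<Sum>j\<in>UNIV. \<Sum>x\<in>ground_rows E. \<beta> x * ground_row r x $ i * ground_row r x $ j * y $ j)" for i
    by (simp add: matrix_vector_mult_def grounded_gram_def sum_distrib_right)
  also have "\<dots> i = (\<Sum>x\<in>ground_rows E. (\<beta> x * (ground_row r x \<bullet> y)) * ground_row r x $ i)" for i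
    by (subst sum.swap) (simp add: inner_vec_def sum_distrib_left sum_distrib_right algebra_simps)
  finally show ?thesis
    by (simp add: vec_eq_iff sum_component)
qed

lemma inner_grounded_gram:
  "y \<bullet> (grounded_gram r E \<beta> *v y) = (\<Sum>x\<in>ground_rows E. \<beta> x * (ground_row r x \<bullet> y)\<^sup>2)"
  by (simp add: grounded_gram_mult inner_sum_right inner_commute power2_eq_square mult.assoc)

lemma transpose_grounded_gram: "transpose (grounded_gram r E \<beta>) = grounded_gram r E \<beta>"
  by (simp add: grounded_gram_def transpose_def vec_eq_iff mult.commute mult.left_commute)

lemma grounded_gram_nonneg_kernel:
  assumes "\<And>x. \<beta> x \<ge> 0" and "y \<bullet> (grounded_gram r E \<beta> *v y) = 0"
  shows "grounded_gram r E \<beta> *v y = 0"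
proof -
  have "\<forall>x\<in>ground_rows E. \<beta> x * (ground_row r x \<bullet> y)\<^sup>2 = 0"
    using assms by (subst sum_nonneg_eq_0_iff[symmetric]) (simp_all add: inner_grounded_gram)
  then have "\<forall>x\<in>ground_rows E. \<beta> x * (ground_row r x \<bullet> y) = 0"
    by (simp add: power2_eq_square)
  then show ?thesis
    unfolding grounded_gram_mult by (intro sum.neutral) simp
qed

lemma grounded_gram_negative_kernel:
  assumes E: "\<forall>e\<in>E. card e = 2" and conn: "connected_by E"
    and neg: "\<And>e. e \<in> E \<Longrightarrow> \<beta> (Some e) < 0"
    and y: "grounded_gram r E \<beta> *v y = 0" and yr: "y $ r = 0"
  shows "y = 0"
proof -
  have "(\<Sum>e\<in>E. - \<beta> (Some e) * (y $ end1 e - y $ end2 e)\<^sup>2) = - (y \<bullet> (grounded_gram r E \<beta> *v y))"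
    using yr by (simp add: inner_grounded_gram ground_rows_def sum.reindex inner_ground_row_None
        inner_ground_row_Some_grounded sum_negf)
  also have "\<dots> = 0"
    using y by simp
  moreover have "0 \<le> - \<beta> (Some e) * (y $ end1 e - y $ end2 e)\<^sup>2" if "e \<in> E" for e
    using neg[OF that] by (simp add: mult_nonpos_nonneg)
  ultimately have "\<forall>e\<in>E. - \<beta> (Some e) * (y $ end1 e - y $ end2 e)\<^sup>2 = 0"
    by (simp add: sum_nonneg_eq_0_iff)
  then have "y $ end1 e = y $ end2 e" if "e \<in> E" for e
    using neg[OF that] that by auto
  then have "y $ v = 0" for v
    using adj_rtrancl_preserves[OF E, of "\<lambda>v. y $ v = 0" r v] conn yr
    by (simp add: connected_by_from[of E r])
  then show ?thesis
    by (simp add: vec_eq_iff)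
qed

lemma grounded_gram_affine:
  "grounded_gram r E (\<lambda>x. \<beta> x + t * \<gamma> x) = grounded_gram r E \<beta> + t *\<^sub>R grounded_gram r E \<gamma>"
  by (simp add: grounded_gram_def vec_eq_iff sum.distrib sum_distrib_left algebra_simps)

lemma ground_rows_kernel:
  assumes "range f = ground_rows S"
  shows "(\<chi> i. ground_row r (f i)) *v y = 0
    \<longleftrightarrow> y $ r = 0 \<and> (\<forall>e\<in>S. y $ end1 e = y $ end2 e)"
proof -
  have "(\<chi> i. ground_row r (f i)) *v y = 0 \<longleftrightarrow> (\<forall>x\<in>range f. ground_row r x \<bullet> y = 0)"
    by (simp add: vec_eq_iff matrix_vector_mult_def inner_vec_def)
  also have "\<dots> \<longleftrightarrow> y $ r = 0 \<and> (\<forall>e\<in>S. y $ end1 e = y $ end2 e)"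
    unfolding assms ground_rows_def
    by (auto simp: inner_ground_row_None inner_ground_row_Some_grounded)
  finally show ?thesis .
qed

lemma det_ground_rows_disconnected:
  fixes f :: "'n::finite \<Rightarrow> 'n set option"
  assumes S: "\<forall>e\<in>S. card e = 2" and f: "range f = ground_rows S"
    and "\<not> connected_by S"
  shows "det (\<chi> i. ground_row r (f i)) = 0"
proof -
  obtain v where v: "(r, v) \<notin> (adj S)\<^sup>*"
    using assms(3) connected_by_from[of S r] by blast
  define y :: "real^'n" where "y = (\<chi> i. if (r, i) \<in> (adj S)\<^sup>* then 0 else 1)"
  have "(r, end1 e) \<in> (adj S)\<^sup>* \<longleftrightarrow> (r, end2 e) \<in> (adj S)\<^sup>*" if "e \<in> S" for e
    using adj_ends[of e S] S that rtrancl.rtrancl_into_rtrancl[of r _ "adj S"] by blast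
  then have "(\<chi> i. ground_row r (f i)) *v y = 0"
    unfolding ground_rows_kernel[OF f] by (simp add: y_def)
  moreover have "y \<noteq> 0"
    using v by (auto simp: y_def vec_eq_iff)
  ultimately show ?thesis
    using det_nz_iff_ker by blast
qed

lemma det_Ints:
  fixes A :: "real^'n^'n"
  assumes "\<And>i j. A $ i $ j \<in> \<int>"
  shows "det A \<in> \<int>"
  unfolding det_def using assms by (intro Ints_sum Ints_mult Ints_prod) auto

lemma Ints_unit_square:
  assumes "(a::real) \<in> \<int>" "b \<in> \<int>" "a * b = 1"
  shows "a\<^sup>2 = 1"
proof -
  obtain m n :: int where "a = of_int m" "b = of_int n"
    using assms Ints_cases by metis
  with assms(3) have "m * n = 1"
    by (metis of_int_eq_1_iff of_int_mult)
  then have "m = 1 \<or> m = -1"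
    using zmult_eq_1_iff by blast
  with \<open>a = of_int m\<close> show ?thesis by auto
qed

lemma Ints_iff_if_diff:
  fixes a b :: "'a::ring_1"
  assumes "a - b \<in> \<int>"
  shows "a \<in> \<int> \<longleftrightarrow> b \<in> \<int>"
proof
  assume "a \<in> \<int>"
  then have "a - (a - b) \<in> \<int>" using assms by (rule Ints_diff)
  then show "b \<in> \<int>" by simp
next
  assume "b \<in> \<int>"
  with assms have "(a - b) + b \<in> \<int>" by (rule Ints_add)
  then show "a \<in> \<int>" by simp
qed

text \<open>Both \<open>Z\<close> and its inverse are integral: \<open>Z y = e\<^sub>k\<close> forces \<open>y\<^sub>r \<in> \<int>\<close> and integral
  differences along the edges, so integrality propagates from \<open>r\<close> to every vertex.\<close>

lemma det_ground_rows_connected: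
  fixes f :: "'n::finite \<Rightarrow> 'n set option"
  assumes S: "\<forall>e\<in>S. card e = 2" and f: "range f = ground_rows S"
    and conn: "connected_by S"
  shows "(det (\<chi> i. ground_row r (f i)))\<^sup>2 = 1"
proof -
  define Z :: "real^'n^'n" where "Z = (\<chi> i. ground_row r (f i))"
  have "det Z \<noteq> 0"
    unfolding det_nz_iff_ker
  proof (intro allI impI)
    fix y assume "Z *v y = 0"
    then have "y $ r = 0" and "\<forall>e\<in>S. y $ end1 e = y $ end2 e"
      unfolding Z_def ground_rows_kernel[OF f] by auto
    with adj_rtrancl_preserves[OF S, of "\<lambda>v. y $ v = 0" r] conn show "y = 0"
      by (auto simp: vec_eq_iff connected_by_from[of S r])
  qed
  then obtain W where ZW: "Z ** W = mat 1"
    using invertible_det_nz[of Z] by (auto simp: invertible_def)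
  have "W $ v $ k \<in> \<int>" for v k
  proof -
    define y where "y = column k W"
    have Zy: "Z *v y = axis k 1"
      unfolding y_def matrix_vector_mult_basis[symmetric] matrix_vector_mul_assoc ZW by simp
    have y: "ground_row r x \<bullet> y \<in> \<int>" if "x \<in> ground_rows S" for x
    proof -
      from that f have "x \<in> range f" by simp
      then obtain i where "x = f i" by blast
      then have "ground_row r x \<bullet> y = (Z *v y) $ i"
        by (simp add: Z_def matrix_vector_mult_def inner_vec_def)
      then show ?thesis
        by (simp add: Zy axis_def)
    qed
    define z where "z v = (if v = r then 0 else y $ v)" for v
    have "z (end1 e) \<in> \<int> \<longleftrightarrow> z (end2 e) \<in> \<int>" if "e \<in> S" for e
    proof (rule Ints_iff_if_diff)
      show "z (end1 e) - z (end2 e) \<in> \<int>"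
        using y[of "Some e"] that by (simp add: ground_rows_def inner_ground_row_Some z_def)
    qed
    then have "z v \<in> \<int>"
      using adj_rtrancl_preserves[OF S, of "\<lambda>v. z v \<in> \<int>" r v] conn
      by (simp add: connected_by_from[of S r] z_def)
    moreover have "y $ r \<in> \<int>"
      using y[of None] by (simp add: ground_rows_def inner_ground_row_None)
    ultimately show ?thesis
      by (auto simp: y_def z_def column_def split: if_splits)
  qed
  moreover have "Z $ i $ j \<in> \<int>" for i j
    by (auto simp: Z_def ground_row_def incidence_def axis_def split: option.splits)
  moreover have "det Z * det W = 1"
    using ZW det_mul[of Z W] by simp
  ultimately show ?thesis
    using Ints_unit_square det_Ints unfolding Z_def by blast
qed

text \<open>The summand of the expansion of \<open>det (\<Sum>\<^sub>x \<beta>\<^sub>x v\<^sub>x v\<^sub>x\<^sup>T)\<close> by multilinearity in the rows in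
  which row \<open>i\<close> is taken from the term \<open>x = f i\<close>.\<close>

definition binet_term :: "'n::finite \<Rightarrow> ('n set option \<Rightarrow> real) \<Rightarrow> ('n \<Rightarrow> 'n set option) \<Rightarrow> real" where
  "binet_term r \<beta> f = (\<Prod>i\<in>UNIV. \<beta> (f i) * ground_row r (f i) $ i) * det (\<chi> i. ground_row r (f i))"

lemma det_grounded_gram_expand:
  fixes r :: "'n::finite"
  shows "det (grounded_gram r E \<beta>)
    = (\<Sum>f | inj f \<and> None \<in> range f \<and> range f \<subseteq> ground_rows E. binet_term r \<beta> f)"
proof -
  have "grounded_gram r E \<beta> = (\<chi> i. \<Sum>x\<in>ground_rows E. (\<beta> x * ground_row r x $ i) *s ground_row r x)"
    by (simp add: grounded_gram_def vec_eq_iff sum_component mult.assoc)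
  then have "det (grounded_gram r E \<beta>) = (\<Sum>f\<in>(UNIV :: 'n set) \<rightarrow>\<^sub>E ground_rows E.
      det (\<chi> i. (\<beta> (f i) * ground_row r (f i) $ i) *s ground_row r (f i)))"
    using det_rows_sum_expand[OF finite] by simp
  also have "\<dots> = (\<Sum>f\<in>UNIV \<rightarrow>\<^sub>E ground_rows E. binet_term r \<beta> f)"
    by (simp add: det_rows_mul binet_term_def)
  also have "\<dots> = (\<Sum>f | inj f \<and> None \<in> range f \<and> range f \<subseteq> ground_rows E. binet_term r \<beta> f)"
  proof (rule sum.mono_neutral_right)
    show "{f :: 'n \<Rightarrow> _. inj f \<and> None \<in> range f \<and> range f \<subseteq> ground_rows E}
        \<subseteq> UNIV \<rightarrow>\<^sub>E ground_rows E"
      by (auto simp: PiE_UNIV_domain)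
    show "\<forall>f\<in>((UNIV :: 'n set) \<rightarrow>\<^sub>E ground_rows E) - {f. inj f \<and> None \<in> range f \<and> range f \<subseteq> ground_rows E}.
        binet_term r \<beta> f = 0"
    proof
      fix f assume f: "f \<in> ((UNIV :: 'n set) \<rightarrow>\<^sub>E ground_rows E) - {f. inj f \<and> None \<in> range f \<and> range f \<subseteq> ground_rows E}"
      show "binet_term r \<beta> f = 0"
      proof (cases "inj f")
        case False
        then obtain i j where "i \<noteq> j" "f i = f j"
          unfolding inj_def by blast
        then have "det (\<chi> i. ground_row r (f i)) = 0"
          by (intro det_identical_rows[of i j]) (simp_all add: row_def vec_eq_iff)
        then show ?thesis by (simp add: binet_term_def)
      next
        case True
        with f have "None \<notin> range f"
          by (auto simp: PiE_UNIV_domain)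
        then obtain e where "f r = Some e"
          by (metis not_None_eq rangeI)
        then have "ground_row r (f r) $ r = 0"
          by (simp add: ground_row_def)
        then show ?thesis
          by (auto simp: binet_term_def prod_zero)
      qed
    qed
  qed simp
  finally show ?thesis .
qed

lemma inj_same_range_eq_permutes:
  fixes f0 :: "'a::finite \<Rightarrow> 'b"
  assumes "inj f0"
  shows "{f. inj f \<and> range f = range f0} = (\<lambda>\<sigma>. f0 \<circ> \<sigma>) ` {\<sigma> :: 'a \<Rightarrow> 'a. \<sigma> permutes UNIV}"
proof (intro set_eqI iffI)
  fix f :: "'a \<Rightarrow> 'b"
  assume "f \<in> {f. inj f \<and> range f = range f0}"
  then have f: "inj f" "range f = range f0" by auto
  define \<sigma> where "\<sigma> = inv f0 \<circ> f"
  have "f x \<in> range f0" for x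
    using f(2) by blast
  then have "f0 \<circ> \<sigma> = f"
    by (simp add: \<sigma>_def fun_eq_iff f_inv_into_f)
  with f(1) have "inj \<sigma>"
    by (metis inj_on_imageI2)
  then have "bij \<sigma>"
    by (simp add: bij_def finite_UNIV_inj_surj)
  then have "\<sigma> permutes UNIV"
    using bij_imp_permutes[of \<sigma> UNIV] by simp
  with \<open>f0 \<circ> \<sigma> = f\<close> show "f \<in> (\<lambda>\<sigma>. f0 \<circ> \<sigma>) ` {\<sigma> :: 'a \<Rightarrow> 'a. \<sigma> permutes UNIV}"
    by blast
next
  fix f assume "f \<in> (\<lambda>\<sigma>. f0 \<circ> \<sigma>) ` {\<sigma> :: 'a \<Rightarrow> 'a. \<sigma> permutes UNIV}"
  then obtain \<sigma> :: "'a \<Rightarrow> 'a" where \<sigma>: "\<sigma> permutes UNIV" "f = f0 \<circ> \<sigma>"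
    by auto
  then have "inj f"
    using assms permutes_inj inj_compose by blast
  moreover have "range f = range f0"
    using \<sigma>(2) permutes_image[OF \<sigma>(1)] by (simp add: image_comp flip: image_image)
  ultimately show "f \<in> {f. inj f \<and> range f = range f0}" by simp
qed

lemma sum_binet_term_same_range:
  fixes f0 :: "'n::finite \<Rightarrow> 'n set option"
  assumes "inj f0"
  shows "(\<Sum>f | inj f \<and> range f = range f0. binet_term r \<beta> f)
    = (\<Prod>x\<in>range f0. \<beta> x) * (det (\<chi> i. ground_row r (f0 i)))\<^sup>2"
proof -
  define Z :: "real^'n^'n" where "Z = (\<chi> i. ground_row r (f0 i))"
  have binet_perm: "binet_term r \<beta> (f0 \<circ> \<sigma>)
      = (\<Prod>x\<in>range f0. \<beta> x) * det Z * (of_int (sign \<sigma>) * (\<Prod>i\<in>UNIV. Z $ \<sigma> i $ i))"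
    if \<sigma>: "\<sigma> permutes UNIV" for \<sigma>
  proof -
    have "binet_term r \<beta> (f0 \<circ> \<sigma>)
        = (\<Prod>i\<in>UNIV. \<beta> (f0 (\<sigma> i))) * (\<Prod>i\<in>UNIV. Z $ \<sigma> i $ i) * det (\<chi> i. Z $ \<sigma> i)"
      by (simp add: binet_term_def Z_def prod.distrib)
    also have "(\<Prod>i\<in>UNIV. \<beta> (f0 (\<sigma> i))) = (\<Prod>x\<in>range f0. \<beta> x)"
      using prod.permute[OF \<sigma>, of "\<lambda>i. \<beta> (f0 i)"] prod.reindex[OF assms, of \<beta>]
      by (simp add: comp_def)
    also have "det (\<chi> i. Z $ \<sigma> i) = of_int (sign \<sigma>) * det Z"
      by (rule det_permute_rows[OF \<sigma>])
    finally show ?thesis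
      by (simp only: ac_simps)
  qed
  have inj_comp: "inj_on (\<lambda>\<sigma>. f0 \<circ> \<sigma>) {\<sigma>. \<sigma> permutes UNIV}"
  proof
    fix \<sigma> \<tau> :: "'n \<Rightarrow> 'n" assume "f0 \<circ> \<sigma> = f0 \<circ> \<tau>"
    then show "\<sigma> = \<tau>"
      using assms by (simp add: fun_eq_iff inj_def)
  qed
  have "(\<Sum>f | inj f \<and> range f = range f0. binet_term r \<beta> f)
      = (\<Sum>\<sigma> | \<sigma> permutes UNIV. binet_term r \<beta> (f0 \<circ> \<sigma>))"
    unfolding inj_same_range_eq_permutes[OF assms] by (simp add: sum.reindex[OF inj_comp])
  also have "\<dots> = (\<Prod>x\<in>range f0. \<beta> x) * det Z * det (transpose Z)"
    by (simp add: binet_perm sum_distrib_left det_def transpose_def)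
  finally show ?thesis
    by (simp add: Z_def power2_eq_square)
qed

lemma card_ground_rows:
  fixes S :: "'n::finite set set"
  shows "card (ground_rows S) = Suc (card S)"
  by (simp add: ground_rows_def card_image image_iff)

lemma sum_binet_term_ground_rows:
  fixes r :: "'n::finite"
  assumes S: "\<forall>e\<in>S. card e = 2" and card: "card S = CARD('n) - 1" and \<beta>: "\<beta> None = 1"
  shows "(\<Sum>f | inj f \<and> range f = ground_rows S. binet_term r \<beta> f)
    = (if connected_by S then \<Prod>e\<in>S. \<beta> (Some e) else 0)"
proof -
  have "card (UNIV :: 'n set) = card (ground_rows S)"
    using card by (simp add: card_ground_rows)
  then obtain f0 :: "'n \<Rightarrow> 'n set option" where "bij_betw f0 UNIV (ground_rows S)"
    using finite_same_card_bij[OF finite finite] by blast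
  then have f0: "inj f0" "range f0 = ground_rows S"
    by (simp_all add: bij_betw_def)
  have "(\<Sum>f | inj f \<and> range f = ground_rows S. binet_term r \<beta> f)
      = (\<Prod>x\<in>ground_rows S. \<beta> x) * (det (\<chi> i. ground_row r (f0 i)))\<^sup>2"
    using sum_binet_term_same_range[OF f0(1)] f0(2) by simp
  also have "(\<Prod>x\<in>ground_rows S. \<beta> x) = (\<Prod>e\<in>S. \<beta> (Some e))"
    using \<beta> by (simp add: ground_rows_def prod.reindex image_iff)
  also have "(det (\<chi> i. ground_row r (f0 i)))\<^sup>2 = (if connected_by S then 1 else 0)"
    using det_ground_rows_connected[OF S f0(2)] det_ground_rows_disconnected[OF S f0(2)] by simp
  finally show ?thesis by simp
qed

theorem matrix_tree_grounded_gram: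
  fixes r :: "'n::finite"
  assumes E: "\<forall>e\<in>E. card e = 2" and \<beta>: "\<beta> None = 1"
  shows "det (grounded_gram r E \<beta>) = (\<Sum>T\<in>spanning_trees E. \<Prod>e\<in>T. \<beta> (Some e))"
proof -
  define F where "F = {f :: 'n \<Rightarrow> 'n set option. inj f \<and> None \<in> range f \<and> range f \<subseteq> ground_rows E}"
  define \<kappa> where "\<kappa> f = {e. Some e \<in> range f}" for f :: "'n \<Rightarrow> 'n set option"
  have range_F: "range f = ground_rows (\<kappa> f)" if "f \<in> F" for f
    using that by (auto simp: F_def \<kappa>_def ground_rows_def image_iff) (metis option.exhaust)
  have classes: "{f \<in> F. \<kappa> f = S} = {f :: 'n \<Rightarrow> _. inj f \<and> range f = ground_rows S}" if "S \<subseteq> E" for S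
  proof (intro set_eqI iffI)
    fix f assume "f \<in> {f \<in> F. \<kappa> f = S}"
    then have "f \<in> F" "\<kappa> f = S" by auto
    with range_F[OF \<open>f \<in> F\<close>] show "f \<in> {f. inj f \<and> range f = ground_rows S}"
      by (simp add: F_def)
  next
    fix f :: "'n \<Rightarrow> 'n set option"
    assume "f \<in> {f. inj f \<and> range f = ground_rows S}"
    with that show "f \<in> {f \<in> F. \<kappa> f = S}"
      by (auto simp: F_def \<kappa>_def ground_rows_def)
  qed
  have "\<kappa> f \<subseteq> E \<and> card (\<kappa> f) = CARD('n) - 1" if "f \<in> F" for f
  proof -
    have "card (ground_rows (\<kappa> f)) = CARD('n)"
      using that card_image[of f UNIV] by (simp add: F_def flip: range_F[OF that])
    then have "card (\<kappa> f) = CARD('n) - 1"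
      by (simp add: card_ground_rows)
    moreover have "\<kappa> f \<subseteq> E"
      using that by (auto simp: F_def \<kappa>_def ground_rows_def)
    ultimately show ?thesis by simp
  qed
  moreover have "S \<in> \<kappa> ` F" if "S \<subseteq> E" "card S = CARD('n) - 1" for S
  proof -
    have "card (UNIV :: 'n set) = card (ground_rows S)"
      using that(2) by (simp add: card_ground_rows)
    then obtain f :: "'n \<Rightarrow> 'n set option" where "bij_betw f UNIV (ground_rows S)"
      using finite_same_card_bij[OF finite finite] by blast
    then have "f \<in> {f \<in> F. \<kappa> f = S}"
      using classes[OF that(1)] that(1) by (auto simp: bij_betw_def ground_rows_def F_def)
    then show ?thesis by blast
  qed
  ultimately have image: "\<kappa> ` F = {S. S \<subseteq> E \<and> card S = CARD('n) - 1}"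
    by blast
  have "det (grounded_gram r E \<beta>) = (\<Sum>f\<in>F. binet_term r \<beta> f)"
    by (simp add: det_grounded_gram_expand F_def)
  also have "\<dots> = (\<Sum>S\<in>\<kappa> ` F. \<Sum>f\<in>{f \<in> F. \<kappa> f = S}. binet_term r \<beta> f)"
    by (rule sum.image_gen) simp
  also have "\<dots> = (\<Sum>S | S \<subseteq> E \<and> card S = CARD('n) - 1.
      if connected_by S then \<Prod>e\<in>S. \<beta> (Some e) else 0)"
    unfolding image
  proof (rule sum.cong[OF refl])
    fix S assume "S \<in> {S. S \<subseteq> E \<and> card S = CARD('n) - 1}"
    then have S: "S \<subseteq> E" "card S = CARD('n) - 1" by auto
    with E have "\<forall>e\<in>S. card e = 2" by blast
    from sum_binet_term_ground_rows[where S=S and \<beta>=\<beta> and r=r, OF this S(2) \<beta>] classes[OF S(1)]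
    show "(\<Sum>f\<in>{f \<in> F. \<kappa> f = S}. binet_term r \<beta> f)
        = (if connected_by S then \<Prod>e\<in>S. \<beta> (Some e) else 0)"
      by simp
  qed
  also have "\<dots> = (\<Sum>T\<in>spanning_trees E. \<Prod>e\<in>T. \<beta> (Some e))"
    by (simp add: sum.inter_filter[symmetric] spanning_trees_def conj_commute conj_left_commute)
  finally show ?thesis .
qed

section \<open>Grounded Laplacians\<close>

lemma sum_pairs_eq_edges:
  fixes \<psi> :: "'n::finite \<Rightarrow> 'n \<Rightarrow> 'a::comm_ring_1"
  assumes sym: "\<And>a b. \<psi> a b = \<psi> b a"
    and supp: "\<And>a b. \<psi> a b \<noteq> 0 \<Longrightarrow> a \<noteq> b \<and> g a b \<noteq> 0"
  shows "(\<Sum>a\<in>UNIV. \<Sum>b\<in>UNIV. \<psi> a b) = 2 * (\<Sum>e\<in>edges g. \<psi> (end1 e) (end2 e))"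
proof -
  let ?E = "edges g"
  have ends: "end1 e \<noteq> end2 e" "e = {end1 e, end2 e}" if "e \<in> ?E" for e
    using ends_card_2 card_edges that by blast+
  define P1 where "P1 = (\<lambda>e. (end1 e, end2 e)) ` ?E"
  define P2 where "P2 = (\<lambda>e. (end2 e, end1 e)) ` ?E"
  have inj1: "inj_on (\<lambda>e. (end1 e, end2 e)) ?E"
    by (rule inj_onI) (metis ends(2) prod.inject)
  have inj2: "inj_on (\<lambda>e. (end2 e, end1 e)) ?E"
    by (rule inj_onI) (metis ends(2) prod.inject)
  have "P1 \<inter> P2 = {}"
  proof (rule ccontr)
    assume "P1 \<inter> P2 \<noteq> {}"
    then obtain e e' where e: "e \<in> ?E" "e' \<in> ?E" "end1 e = end2 e'" "end2 e = end1 e'"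
      unfolding P1_def P2_def by auto
    then have "e = e'"
      using ends(2)[OF e(1)] ends(2)[OF e(2)] by (metis insert_commute)
    with e(3) ends(1)[OF e(1)] show False by simp
  qed
  have "(\<Sum>a\<in>UNIV. \<Sum>b\<in>UNIV. \<psi> a b) = (\<Sum>p\<in>UNIV. \<psi> (fst p) (snd p))"
    by (simp add: sum.cartesian_product case_prod_beta flip: UNIV_Times_UNIV)
  also have "\<dots> = (\<Sum>p\<in>P1 \<union> P2. \<psi> (fst p) (snd p))"
  proof (rule sum.mono_neutral_right)
    show "\<forall>p\<in>UNIV - (P1 \<union> P2). \<psi> (fst p) (snd p) = 0"
    proof (rule ballI, rule ccontr)
      fix p assume p: "p \<in> UNIV - (P1 \<union> P2)" and nz: "\<psi> (fst p) (snd p) \<noteq> 0"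
      obtain a b where ab: "p = (a, b)" by fastforce
      with supp nz have "a \<noteq> b" "g a b \<noteq> 0"
        by auto
      then have "{a, b} \<in> ?E"
        unfolding edges_def by blast
      moreover from ends(2)[OF this] have "(a, b) = (end1 {a, b}, end2 {a, b}) \<or> (a, b) = (end2 {a, b}, end1 {a, b})"
        by (simp add: doubleton_eq_iff)
      moreover have "(end1 {a, b}, end2 {a, b}) \<in> P1" "(end2 {a, b}, end1 {a, b}) \<in> P2"
        using \<open>{a, b} \<in> ?E\<close> by (simp_all add: P1_def P2_def)
      ultimately have "(a, b) \<in> P1 \<union> P2"
        by auto
      with p ab show False by simp
    qed
  qed auto
  also have "\<dots> = (\<Sum>p\<in>P1. \<psi> (fst p) (snd p)) + (\<Sum>p\<in>P2. \<psi> (fst p) (snd p))"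
    using \<open>P1 \<inter> P2 = {}\<close> by (simp add: sum.union_disjoint)
  also have "(\<Sum>p\<in>P2. \<psi> (fst p) (snd p)) = (\<Sum>e\<in>?E. \<psi> (end1 e) (end2 e))"
    unfolding P2_def sum.reindex[OF inj2] by (simp add: sym)
  also have "(\<Sum>p\<in>P1. \<psi> (fst p) (snd p)) = (\<Sum>e\<in>?E. \<psi> (end1 e) (end2 e))"
    unfolding P1_def sum.reindex[OF inj1] by simp
  finally show ?thesis by simp
qed

lemma sum_if_const_cond: "(\<Sum>x\<in>A. if P then f x else 0) = (if P then sum f A else 0)"
  by simp

lemma sum_pairs_delta_products:
  fixes w :: "'n::finite \<Rightarrow> 'n \<Rightarrow> real"
  shows "(\<Sum>a\<in>UNIV. \<Sum>b\<in>UNIV. w a b * ((if a = i then 1 else 0) - (if b = i then 1 else 0))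
      * ((if a = j then 1 else 0) - (if b = j then 1 else 0)))
    = (if i = j then (\<Sum>b\<in>UNIV. w i b) + (\<Sum>a\<in>UNIV. w a i) else 0) - w i j - w j i"
proof -
  have expand: "w a b * ((if a = i then 1 else 0) - (if b = i then 1 else 0))
      * ((if a = j then 1 else 0) - (if b = j then 1 else 0))
    = (if a = i then if i = j then w a b else 0 else 0)
      + (if b = i then if i = j then w a b else 0 else 0)
      - (if a = i then if b = j then w a b else 0 else 0)
      - (if a = j then if b = i then w a b else 0 else 0)" for a b
    by (cases "a = i"; cases "a = j"; cases "b = i"; cases "b = j") simp_all
  show ?thesis
    unfolding expand sum.distrib sum_subtractf by (simp add: sum_if_const_cond)
qed

lemma laplacian_edge_sum:
  fixes w g :: "'n::finite \<Rightarrow> 'n \<Rightarrow> real"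
  assumes sym: "\<And>a b. w a b = w b a" and diag: "\<And>a. w a a = 0"
    and supp: "\<And>a b. w a b \<noteq> 0 \<Longrightarrow> g a b \<noteq> 0"
  shows "laplacian w $ i $ j
    = (\<Sum>e\<in>edges g. - w (end1 e) (end2 e) * incidence e $ i * incidence e $ j)"
proof -
  define \<delta> where "\<delta> a b k = (if a = k then 1 else 0) - (if b = k then (1::real) else 0)" for a b k :: 'n
  define \<psi> where "\<psi> a b = w a b * \<delta> a b i * \<delta> a b j" for a b
  have "(\<Sum>a\<in>UNIV. \<Sum>b\<in>UNIV. \<psi> a b) = 2 * (\<Sum>e\<in>edges g. \<psi> (end1 e) (end2 e))"
  proof (rule sum_pairs_eq_edges)
    show "\<psi> a b = \<psi> b a" for a b
      using sym[of a b] by (simp add: \<psi>_def \<delta>_def algebra_simps)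
    show "a \<noteq> b \<and> g a b \<noteq> 0" if "\<psi> a b \<noteq> 0" for a b
      using that supp[of a b] by (auto simp: \<psi>_def \<delta>_def)
  qed
  moreover have "(\<Sum>a\<in>UNIV. \<Sum>b\<in>UNIV. \<psi> a b) = 2 * ((if i = j then \<Sum>b\<in>UNIV. w i b else 0) - w i j)"
  proof -
    have "(\<Sum>a\<in>UNIV. w a k) = (\<Sum>b\<in>UNIV. w k b)" for k
      using sym by (intro sum.cong) auto
    then show ?thesis
      using sum_pairs_delta_products[of w i j] sym[of j i] by (simp add: \<psi>_def \<delta>_def)
  qed
  moreover have "laplacian w $ i $ j = - ((if i = j then \<Sum>b\<in>UNIV. w i b else 0) - w i j)"
    using diag by (simp add: laplacian_def sum_diff1)
  moreover have "\<psi> (end1 e) (end2 e) = w (end1 e) (end2 e) * incidence e $ i * incidence e $ j" for e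
    by (simp add: \<psi>_def \<delta>_def incidence_def)
  ultimately show ?thesis
    by (simp add: sum_negf)
qed

definition ground_weight :: "('n \<Rightarrow> 'n \<Rightarrow> real) \<Rightarrow> 'n set option \<Rightarrow> real" where
  "ground_weight w x = (case x of None \<Rightarrow> 1 | Some e \<Rightarrow> - edge_weight w e)"

lemma grounded_gram_entry:
  fixes w g :: "'n::finite \<Rightarrow> 'n \<Rightarrow> real"
  assumes sym: "\<And>a b. w a b = w b a" and diag: "\<And>a. w a a = 0"
    and supp: "\<And>a b. w a b \<noteq> 0 \<Longrightarrow> g a b \<noteq> 0"
  shows "grounded_gram r (edges g) (ground_weight w) $ i $ j
    = (if i = r \<or> j = r then (if i = j then 1 else 0) else laplacian w $ i $ j)"
proof (cases "i = r \<or> j = r")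
  case True
  then show ?thesis
    by (auto simp: grounded_gram_def ground_rows_def ground_row_def ground_weight_def axis_def
        sum.reindex)
next
  case False
  then have "grounded_gram r (edges g) (ground_weight w) $ i $ j
      = (\<Sum>e\<in>edges g. - w (end1 e) (end2 e) * incidence e $ i * incidence e $ j)"
    by (simp add: grounded_gram_def ground_rows_def ground_row_def ground_weight_def
        edge_weight_ends axis_def sum.reindex)
  with False show ?thesis
    using laplacian_edge_sum[where w=w and g=g, OF sym diag supp] by simp
qed

lemma laplacian_row_sum: "(\<Sum>j\<in>UNIV. laplacian w $ i $ j) = 0"
proof -
  have "(\<Sum>j\<in>UNIV. laplacian w $ i $ j) = laplacian w $ i $ i + (\<Sum>j\<in>UNIV - {i}. w i j)"
    by (simp add: sum.remove[of UNIV i] laplacian_def)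
  then show ?thesis
    by (simp add: laplacian_def)
qed

lemma laplacian_symmetric:
  "(\<And>a b. w a b = w b a) \<Longrightarrow> laplacian w $ i $ j = laplacian w $ j $ i"
  by (simp add: laplacian_def)

lemma laplacian_mult_ones: "laplacian w *v (\<chi> i. 1) = 0"
  by (simp add: vec_eq_iff matrix_vector_mult_def laplacian_row_sum)

lemma sum_laplacian_mult:
  assumes "\<And>a b. w a b = w b a"
  shows "(\<Sum>i\<in>UNIV. (laplacian w *v v) $ i) = 0"
proof -
  have "(\<Sum>i\<in>UNIV. (laplacian w *v v) $ i) = (\<Sum>i\<in>UNIV. \<Sum>j\<in>UNIV. laplacian w $ i $ j * v $ j)"
    by (simp add: matrix_vector_mult_def)
  also have "\<dots> = (\<Sum>j\<in>UNIV. \<Sum>i\<in>UNIV. laplacian w $ i $ j * v $ j)"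
    by (rule sum.swap)
  also have "\<dots> = (\<Sum>j\<in>UNIV. (\<Sum>i\<in>UNIV. laplacian w $ j $ i) * v $ j)"
    using laplacian_symmetric[where w=w, OF assms] by (simp add: sum_distrib_right)
  finally show ?thesis
    by (simp add: laplacian_row_sum)
qed

lemma grounded_gram_kernel:
  fixes w g :: "'n::finite \<Rightarrow> 'n \<Rightarrow> real"
  assumes sym: "\<And>a b. w a b = w b a" and diag: "\<And>a. w a a = 0"
    and supp: "\<And>a b. w a b \<noteq> 0 \<Longrightarrow> g a b \<noteq> 0"
  shows "grounded_gram r (edges g) (ground_weight w) *v v = 0
    \<longleftrightarrow> laplacian w *v v = 0 \<and> v $ r = 0"
proof -
  let ?L = "laplacian w"
  have comp: "(grounded_gram r (edges g) (ground_weight w) *v v) $ i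
      = (if i = r then v $ r else (?L *v v) $ i - ?L $ i $ r * v $ r)" for i
  proof -
    have "(grounded_gram r (edges g) (ground_weight w) *v v) $ i
        = (\<Sum>j\<in>UNIV. (if i = r \<or> j = r then (if i = j then 1 else 0) else ?L $ i $ j) * v $ j)"
      by (simp add: matrix_vector_mult_def grounded_gram_entry[where w=w and g=g, OF sym diag supp])
    also have "\<dots> = (if i = r then v $ r else (?L *v v) $ i - ?L $ i $ r * v $ r)"
      by (auto simp: matrix_vector_mult_def sum.remove[of UNIV r] if_distrib[of "\<lambda>x. x * _"]
          cong: if_cong)
    finally show ?thesis .
  qed
  show ?thesis
  proof
    assume v: "grounded_gram r (edges g) (ground_weight w) *v v = 0"
    then have vr: "v $ r = 0"
      using comp[of r] by (simp add: vec_eq_iff)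
    with v comp have off_r: "(?L *v v) $ i = 0" if "i \<noteq> r" for i
      using that by (metis (no_types, lifting) diff_zero mult_zero_right zero_index)
    have "(?L *v v) $ r = (\<Sum>i\<in>UNIV. (?L *v v) $ i)"
      using off_r by (simp add: sum.remove[of UNIV r])
    then have "(?L *v v) $ r = 0"
      using sum_laplacian_mult[OF sym] by simp
    with off_r vr show "?L *v v = 0 \<and> v $ r = 0"
      by (metis vec_eq_iff zero_index)
  next
    assume "?L *v v = 0 \<and> v $ r = 0"
    then show "grounded_gram r (edges g) (ground_weight w) *v v = 0"
      using comp by (simp add: vec_eq_iff)
  qed
qed

text \<open>\<open>v \<mapsto> v - v\<^sub>r 1\<close> maps the first space bijectively onto the second.\<close>

lemma dim_kernel_sum_zero_eq_coordinate_zero: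
  fixes L :: "real^'n::finite^'n"
  assumes ones: "L *v (\<chi> i. 1) = 0"
  shows "dim {v. L *v v = 0 \<and> (\<Sum>i\<in>UNIV. v $ i) = 0} = dim {v. L *v v = 0 \<and> v $ r = 0}"
proof -
  define A where "A = {v. L *v v = 0 \<and> (\<Sum>i\<in>UNIV. v $ i) = 0}"
  define \<phi> where "\<phi> v = v - (v $ r) *\<^sub>R (\<chi> i. 1)" for v :: "real^'n"
  have L\<phi>: "L *v \<phi> v = L *v v" for v
    by (simp add: \<phi>_def matrix_vector_mult_diff_distrib matrix_vector_mult_scaleR ones)
  have "linear \<phi>"
    by (simp add: linear_iff \<phi>_def algebra_simps)
  moreover have "subspace A"
    by (auto simp: subspace_def A_def matrix_vector_right_distrib matrix_vector_mult_scaleR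
        sum.distrib sum_distrib_left[symmetric])
  moreover have "inj_on \<phi> A"
  proof (rule inj_onI)
    fix x y assume "x \<in> A" "y \<in> A" "\<phi> x = \<phi> y"
    then have xy: "x - y = (x $ r - y $ r) *\<^sub>R (\<chi> i. 1)"
      by (simp add: \<phi>_def algebra_simps)
    have "(\<Sum>i\<in>UNIV. (x - y) $ i) = 0"
      using \<open>x \<in> A\<close> \<open>y \<in> A\<close> by (simp add: A_def sum_subtractf)
    then have "x $ r = y $ r"
      unfolding xy by simp
    with xy show "x = y" by simp
  qed
  moreover have "\<phi> ` A = {v. L *v v = 0 \<and> v $ r = 0}"
  proof (intro set_eqI iffI)
    fix y assume "y \<in> \<phi> ` A"
    then show "y \<in> {v. L *v v = 0 \<and> v $ r = 0}"
      by (auto simp: A_def L\<phi>) (simp add: \<phi>_def)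
  next
    fix y assume y: "y \<in> {v. L *v v = 0 \<and> v $ r = 0}"
    define x where "x = y - ((\<Sum>i\<in>UNIV. y $ i) / CARD('n)) *\<^sub>R (\<chi> i. 1)"
    have "x \<in> A"
      using y by (simp add: A_def x_def matrix_vector_mult_diff_distrib matrix_vector_mult_scaleR
          ones sum_subtractf)
    moreover have "\<phi> x = y"
      using y by (simp add: \<phi>_def x_def vec_eq_iff)
    ultimately show "y \<in> \<phi> ` A" by blast
  qed
  ultimately show ?thesis
    unfolding A_def[symmetric] by (metis dim_image_eq span_eq_iff)
qed

lemma det_grounded_laplacian:
  fixes g w :: "'n::finite \<Rightarrow> 'n \<Rightarrow> real"
  shows "det (grounded_gram r (edges g) (ground_weight w))
    = (-1) ^ (CARD('n) - 1) * M (edges g) (edge_weight w)"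
proof -
  have "\<forall>e\<in>edges g. card e = 2"
    using card_edges by blast
  then have "det (grounded_gram r (edges g) (ground_weight w))
      = (\<Sum>T\<in>spanning_trees (edges g). \<Prod>e\<in>T. ground_weight w (Some e))"
    by (rule matrix_tree_grounded_gram) (simp add: ground_weight_def)
  also have "\<dots> = (\<Sum>T\<in>spanning_trees (edges g). \<Prod>e\<in>T. - edge_weight w e)"
    by (simp add: ground_weight_def)
  also have "\<dots> = (\<Sum>T\<in>spanning_trees (edges g). (-1) ^ (CARD('n) - 1) * (\<Prod>e\<in>T. edge_weight w e))"
    by (intro sum.cong refl) (simp add: prod_uminus spanning_trees_def)
  finally show ?thesis
    by (simp add: M_def sum_distrib_left)
qed

section \<open>Signed graphs\<close>

lemma poly_M_poly: "poly (M_poly g) t = M (edges g) (edge_weight (gamma_t g t))"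
proof -
  have "poly (edge_weight (gamma_poly g) e) t = edge_weight (gamma_t g t) e" for e
    by (simp add: edge_weight_def gamma_poly_def gamma_t_def mult.commute)
  then show ?thesis
    by (simp add: M_poly_def M_def poly_sum poly_prod)
qed

text \<open>Grounding \<open>\<Gamma>(t)\<close> at \<open>r\<close> gives \<open>grounded_base r g + t grounded_slope r g\<close>; the slope has weight
  \<open>-\<gamma>\<^sub>e \<ge> 0\<close> on the negative edges and \<open>0\<close> on all other rows.\<close>

definition grounded_base :: "'n::finite \<Rightarrow> ('n \<Rightarrow> 'n \<Rightarrow> real) \<Rightarrow> real^'n^'n" where
  "grounded_base r g = grounded_gram r (edges g) (ground_weight (gamma_t g 0))"

definition grounded_slope :: "'n::finite \<Rightarrow> ('n \<Rightarrow> 'n \<Rightarrow> real) \<Rightarrow> real^'n^'n" where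
  "grounded_slope r g
    = grounded_gram r (edges g) (\<lambda>x. ground_weight g x - ground_weight (gamma_t g 0) x)"

lemma grounded_gram_gamma_t:
  "grounded_gram r (edges g) (ground_weight (gamma_t g t)) = grounded_base r g + t *\<^sub>R grounded_slope r g"
proof -
  have "ground_weight (gamma_t g t) x
      = ground_weight (gamma_t g 0) x + t * (ground_weight g x - ground_weight (gamma_t g 0) x)" for x
    by (simp add: ground_weight_def gamma_t_def edge_weight_def split: option.split)
  then have "ground_weight (gamma_t g t)
      = (\<lambda>x. ground_weight (gamma_t g 0) x + t * (ground_weight g x - ground_weight (gamma_t g 0) x))"
    by (rule ext)
  then show ?thesis
    by (simp add: grounded_base_def grounded_slope_def grounded_gram_affine)
qed

lemma det_grounded_pencil:
  fixes g :: "'n::finite \<Rightarrow> 'n \<Rightarrow> real"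
  shows "det (matrix_pencil (grounded_base r g) (grounded_slope r g))
    = smult ((-1) ^ (CARD('n) - 1)) (M_poly g)"
  by (rule poly_eq_poly_eq_iff[THEN iffD1])
    (simp add: fun_eq_iff poly_det_matrix_pencil poly_M_poly det_grounded_laplacian
      flip: grounded_gram_gamma_t)

lemma grounded_slope_semidefinite:
  assumes "x \<bullet> (grounded_slope r g *v x) = 0"
  shows "grounded_slope r g *v x = 0"
  using assms unfolding grounded_slope_def
  by (rule grounded_gram_nonneg_kernel[rotated])
    (simp add: ground_weight_def gamma_t_def edge_weight_def split: option.split)

lemma edge_weight_nonzero:
  assumes sym: "\<And>a b. g a b = g b a" and e: "e \<in> edges g"
  shows "edge_weight g e \<noteq> 0"
proof -
  obtain i j where ij: "e = {i, j}" "g i j \<noteq> 0"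
    using e by (auto simp: edges_def)
  moreover have "e = {end1 e, end2 e}"
    using ends_card_2(2)[OF card_edges[OF e]] .
  ultimately show ?thesis
    using sym[of i j] by (auto simp: edge_weight_ends doubleton_eq_iff)
qed

lemma gamma_t_symmetric: "signed_graph g \<Longrightarrow> gamma_t g t a b = gamma_t g t b a"
  by (simp add: signed_graph_def gamma_t_def)

lemma gamma_t_diag: "signed_graph g \<Longrightarrow> gamma_t g t a a = 0"
  by (simp add: signed_graph_def gamma_t_def)

lemma gamma_t_support: "gamma_t g t a b \<noteq> 0 \<Longrightarrow> g a b \<noteq> 0"
  by (auto simp: gamma_t_def split: if_splits)

lemma grounded_laplacian_kernel:
  assumes "signed_graph g"
  shows "grounded_gram r (edges g) (ground_weight (gamma_t g t)) *v v = 0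
    \<longleftrightarrow> laplacian (gamma_t g t) *v v = 0 \<and> v $ r = 0"
  by (rule grounded_gram_kernel)
    (simp_all add: gamma_t_symmetric[OF assms] gamma_t_diag[OF assms] gamma_t_support)

lemma grounded_pencil_nondegenerate:
  fixes g :: "'n::finite \<Rightarrow> 'n \<Rightarrow> real"
  assumes signed: "signed_graph g" and conn: "graph_connected g"
  shows "det (matrix_pencil (grounded_base r g) (grounded_slope r g)) \<noteq> 0"
proof -
  \<comment> \<open>\<open>\<Gamma>(-1)\<close> has the positive weights \<open>|\<gamma>\<^sub>i\<^sub>j|\<close>.\<close>
  have "det (grounded_gram r (edges g) (ground_weight (gamma_t g (-1)))) \<noteq> 0"
    unfolding det_nz_iff_ker
  proof (intro allI impI)
    fix y assume y: "grounded_gram r (edges g) (ground_weight (gamma_t g (-1))) *v y = 0"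
    have nz: "edge_weight g e \<noteq> 0" if "e \<in> edges g" for e
      using signed that by (intro edge_weight_nonzero) (auto simp: signed_graph_def)
    have "ground_weight (gamma_t g (-1)) (Some e) < 0" if "e \<in> edges g" for e
      using nz[OF that] by (auto simp: ground_weight_def gamma_t_def edge_weight_def linorder_neq_iff)
    moreover have "y $ r = 0"
      using y grounded_laplacian_kernel[OF signed] by blast
    ultimately show "y = 0"
      using grounded_gram_negative_kernel[OF _ _ _ y] card_edges conn
      by (auto simp: graph_connected_def)
  qed
  then have "poly (det (matrix_pencil (grounded_base r g) (grounded_slope r g))) (-1) \<noteq> 0"
    using grounded_gram_gamma_t[of r g "-1"] by (simp add: poly_det_matrix_pencil)
  then show ?thesis
    by auto
qed

theorem mainTheorem6:
  fixes g :: "'n::finite \<Rightarrow> 'n \<Rightarrow> real" and tstar :: real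
  assumes "signed_graph g" and "graph_connected g"
  shows "dim {v :: real^'n. laplacian (gamma_t g tstar) *v v = 0 \<and> (\<Sum>i\<in>UNIV. v $ i) = 0}
         = order tstar (M_poly g)"
proof -
  fix r :: 'n
  let ?C = "grounded_base r g" and ?D = "grounded_slope r g"
  have "dim {v :: real^'n. laplacian (gamma_t g tstar) *v v = 0 \<and> (\<Sum>i\<in>UNIV. v $ i) = 0}
      = dim {v. laplacian (gamma_t g tstar) *v v = 0 \<and> v $ r = 0}"
    by (rule dim_kernel_sum_zero_eq_coordinate_zero[OF laplacian_mult_ones])
  also have "\<dots> = dim {v. (?C + tstar *\<^sub>R ?D) *v v = 0}"
    by (simp add: grounded_laplacian_kernel[OF assms(1)] flip: grounded_gram_gamma_t)
  also have "\<dots> = order tstar (det (matrix_pencil ?C ?D))"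
    using matrix_pencil_root_order[OF _ grounded_slope_semidefinite
        grounded_pencil_nondegenerate[OF assms]]
    by (simp add: transpose_grounded_gram flip: grounded_gram_gamma_t)
  also have "\<dots> = order tstar (M_poly g)"
    by (simp add: det_grounded_pencil order_smult)
  finally show ?thesis .
qed

end
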